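(* Let $\mathcal{H}$ be a real Hilbert space, $N\ge2$, $A_1,\dots,A_N:\mathcal{H}\rightrightarrows\mathcal{H}$ maximally monotone, $\theta\in(0,1)$, and $\Gamma\subseteq\mathbb{R}_{++}$ a nonempty closed interval. For $\gamma\in\Gamma$ let $T_\gamma:\mathcal{H}^{N-1}\to\mathcal{H}^{N-1}$ be the Malitsky--Tam operator and, for $\gamma,\delta\in\mathbb{R}_{++}$, let $\tilde{\mathcal{Q}}_{\delta\leftarrow\gamma}$ be the relocator, both defined in the context. Then for any nonempty bounded set $S\subseteq\bigcup_{\gamma\in\Gamma}(\operatorname{Fix}T_\gamma\times\{\gamma\})$ there exists $L\ge0$ with $\|\tilde{\mathcal{Q}}_{\delta\leftarrow\gamma}\mathbf{x}-\tilde{\mathcal{Q}}_{\gamma\leftarrow\gamma}\mathbf{x}\|\le L|\delta-\gamma|$ for all $\delta\in\Gamma$ and all $(\mathbf{x},\gamma)\in S$.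
   Context: $J_A=(\mathrm{Id}+A)^{-1}$. Malitsky--Tam operator: for $\mathbf{x}=(x^1,\dots,x^{N-1})\in\mathcal{H}^{N-1}$, set $z^1=J_{\gamma A_1}x^1$, $z^i=J_{\gamma A_i}(z^{i-1}+x^i-x^{i-1})$ for $i=2,\dots,N-1$, $z^N=J_{\gamma A_N}(z^1+z^{N-1}-x^{N-1})$, and $T_\gamma\mathbf{x}=\mathbf{x}+\theta(z^2-z^1,\dots,z^N-z^{N-1})$. Relocator: $\tilde{\mathcal{Q}}^1_{\delta\leftarrow\gamma}\mathbf{x}=\frac{\delta}{\gamma}x^1+(1-\frac{\delta}{\gamma})J_{\gamma A_1}x^1$ and $\tilde{\mathcal{Q}}^i_{\delta\leftarrow\gamma}\mathbf{x}=\frac{\delta}{\gamma}(x^i-x^1)+\tilde{\mathcal{Q}}^1_{\delta\leftarrow\gamma}\mathbf{x}$ for $i=2,\dots,N-1$; $\tilde{\mathcal{Q}}_{\delta\leftarrow\gamma}=(\tilde{\mathcal{Q}}^1_{\delta\leftarrow\gamma},\dots,\tilde{\mathcal{Q}}^{N-1}_{\delta\leftarrow\gamma})$. $\mathcal{H}^{N-1}$ carries the product Hilbert norm. *)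

theory Defs
  imports "HOL-Analysis.Analysis"
begin

definition monotone_op :: "('a::real_inner \<Rightarrow> 'a set) \<Rightarrow> bool" where
  "monotone_op A \<longleftrightarrow> (\<forall>x y u v. u \<in> A x \<longrightarrow> v \<in> A y \<longrightarrow> inner (x - y) (u - v) \<ge> 0)"

definition max_monotone :: "('a::real_inner \<Rightarrow> 'a set) \<Rightarrow> bool" where
  "max_monotone A \<longleftrightarrow> monotone_op A \<and>
     (\<forall>x u. (\<forall>y v. v \<in> A y \<longrightarrow> inner (x - y) (u - v) \<ge> 0) \<longrightarrow> u \<in> A x)"

text \<open>Resolvent J_{gamma A} = (Id + gamma A)^{-1}: the point z with x \<in> z + gamma A z
  (unique and existing for maximally monotone A and gamma > 0, by Minty).\<close>
definition resolvent :: "real \<Rightarrow> ('a::real_inner \<Rightarrow> 'a set) \<Rightarrow> 'a \<Rightarrow> 'a" where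
  "resolvent \<gamma> A x = (THE z. \<exists>u \<in> A z. x = z + \<gamma> *\<^sub>R u)"

text \<open>Points of H^{N-1} are functions nat \<Rightarrow> 'a, only indices 1..N-1 are relevant.
  mt_z computes z^1,...,z^{N-1} (index i), recursively.\<close>
fun mt_zr :: "(nat \<Rightarrow> 'a::real_inner \<Rightarrow> 'a set) \<Rightarrow> real \<Rightarrow> (nat \<Rightarrow> 'a) \<Rightarrow> nat \<Rightarrow> 'a" where
  "mt_zr A \<gamma> x 0 = 0"
| "mt_zr A \<gamma> x (Suc i) =
     (if i = 0 then resolvent \<gamma> (A 1) (x 1)
      else resolvent \<gamma> (A (Suc i)) (mt_zr A \<gamma> x i + x (Suc i) - x i))"

definition mt_z :: "nat \<Rightarrow> (nat \<Rightarrow> 'a::real_inner \<Rightarrow> 'a set) \<Rightarrow> real \<Rightarrow> (nat \<Rightarrow> 'a) \<Rightarrow> nat \<Rightarrow> 'a" where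
  "mt_z N A \<gamma> x i =
     (if i = N then resolvent \<gamma> (A N) (mt_zr A \<gamma> x 1 + mt_zr A \<gamma> x (N - 1) - x (N - 1))
      else mt_zr A \<gamma> x i)"

definition mt_op :: "nat \<Rightarrow> (nat \<Rightarrow> 'a::real_inner \<Rightarrow> 'a set) \<Rightarrow> real \<Rightarrow> real \<Rightarrow> (nat \<Rightarrow> 'a) \<Rightarrow> nat \<Rightarrow> 'a" where
  "mt_op N A \<theta> \<gamma> x i = x i + \<theta> *\<^sub>R (mt_z N A \<gamma> x (Suc i) - mt_z N A \<gamma> x i)"

definition mt_fix :: "nat \<Rightarrow> (nat \<Rightarrow> 'a::real_inner \<Rightarrow> 'a set) \<Rightarrow> real \<Rightarrow> real \<Rightarrow> (nat \<Rightarrow> 'a) set" where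
  "mt_fix N A \<theta> \<gamma> = {x. \<forall>i\<in>{1..N-1}. mt_op N A \<theta> \<gamma> x i = x i}"

definition reloc :: "(nat \<Rightarrow> 'a::real_inner \<Rightarrow> 'a set) \<Rightarrow> real \<Rightarrow> real \<Rightarrow> (nat \<Rightarrow> 'a) \<Rightarrow> nat \<Rightarrow> 'a" where
  "reloc A \<delta> \<gamma> x i =
     (let q1 = (\<delta> / \<gamma>) *\<^sub>R x 1 + (1 - \<delta> / \<gamma>) *\<^sub>R resolvent \<gamma> (A 1) (x 1)
      in if i = 1 then q1 else (\<delta> / \<gamma>) *\<^sub>R (x i - x 1) + q1)"

definition pnorm :: "nat \<Rightarrow> (nat \<Rightarrow> 'a::real_normed_vector) \<Rightarrow> real" where
  "pnorm N x = sqrt (\<Sum>i\<in>{1..N-1}. (norm (x i))\<^sup>2)"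

end

theory Submission
  imports Defs
begin

(* The two relocators differ by ((delta - gamma) / gamma) (x^i - J_{gamma A_1} x^1), so it suffices
   to bound gamma^{-1} times the distance of x to J_{gamma A_1} x^1 uniformly on S.  Here gamma is
   bounded below by min Gamma > 0, and J_{gamma A_1} x^1 stays bounded because the resolvent is
   nonexpansive and maps y + gamma v to y for any (y, v) in the graph of A_1.

   Since the resolvent is a definite description, its existence (Minty's theorem) has to be
   proved: minimise r + (|x|^2 + |u|^2)/2 over the epigraph of the Fitzpatrick function of a
   maximally monotone B; the variational inequality at the minimiser (x0, u0) gives
   -x0 \<in> B (-u0), and testing it against this very pair forces x0 = -u0. *)

section \<open>Minimising a quadratic over a closed convex set\<close>

lemma parallelogram_law:
  fixes a b :: "'a::real_inner"
  shows "(norm (a + b))\<^sup>2 + (norm (a - b))\<^sup>2 = 2 * (norm a)\<^sup>2 + 2 * (norm b)\<^sup>2"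
  by (simp add: power2_norm_eq_inner inner_add_left inner_add_right inner_diff_left
      inner_diff_right inner_commute)

lemma norm_add_scaleR_square:
  fixes a w :: "'a::real_inner"
  shows "(norm (a + t *\<^sub>R w))\<^sup>2 = (norm a)\<^sup>2 + 2 * t * inner a w + t\<^sup>2 * (norm w)\<^sup>2"
proof -
  have "(norm (a + t *\<^sub>R w))\<^sup>2 = inner (a + t *\<^sub>R w) (a + t *\<^sub>R w)"
    by (simp add: power2_norm_eq_inner)
  also have "\<dots> = inner a a + 2 * t * inner a w + t\<^sup>2 * inner w w"
    by (simp add: inner_add_left inner_add_right inner_commute power2_eq_square algebra_simps)
  finally show ?thesis by (simp add: power2_norm_eq_inner)
qed

lemma Cauchy_if_sq_dist_le_null:
  fixes X :: "nat \<Rightarrow> 'a::metric_space"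
  assumes "e \<longlonglongrightarrow> 0" and "\<And>n k. (dist (X n) (X k))\<^sup>2 \<le> e n + e k"
  shows "Cauchy X"
proof (rule metric_CauchyI)
  fix \<epsilon> :: real assume "0 < \<epsilon>"
  then have "eventually (\<lambda>n. e n < \<epsilon>\<^sup>2 / 2) sequentially"
    using assms(1) by (intro order_tendstoD) auto
  then obtain M where M: "\<And>n. n \<ge> M \<Longrightarrow> e n < \<epsilon>\<^sup>2 / 2"
    by (auto simp: eventually_sequentially)
  have "dist (X m) (X n) < \<epsilon>" if "m \<ge> M" "n \<ge> M" for m n
  proof -
    have "(dist (X m) (X n))\<^sup>2 < \<epsilon>\<^sup>2"
      using assms(2)[of m n] M[OF that(1)] M[OF that(2)] by linarith
    then show ?thesis using \<open>0 < \<epsilon>\<close> by (simp add: power2_less_imp_less)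
  qed
  then show "\<exists>M. \<forall>m\<ge>M. \<forall>n\<ge>M. dist (X m) (X n) < \<epsilon>" by blast
qed

lemma closed_convex_has_min_quadratic:
  fixes C :: "('b::{real_inner,complete_space} \<times> real) set"
  assumes "closed C" "convex C" "C \<noteq> {}"
    and bdd: "bdd_below ((\<lambda>(p, r). r + (norm p)\<^sup>2 / 2) ` C)"
  obtains p0 r0 where "(p0, r0) \<in> C"
    and "\<And>p r. (p, r) \<in> C \<Longrightarrow> r0 + (norm p0)\<^sup>2 / 2 \<le> r + (norm p)\<^sup>2 / 2"
proof -
  define f :: "'b \<times> real \<Rightarrow> real" where "f = (\<lambda>(p, r). r + (norm p)\<^sup>2 / 2)"
  define m where "m = Inf (f ` C)"
  have m_le: "m \<le> f w" if "w \<in> C" for w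
    using bdd that unfolding m_def f_def by (auto intro: cInf_lower)
  have "m \<in> closure (f ` C)"
    unfolding m_def using assms(3) bdd f_def by (intro closure_contains_Inf) auto
  then obtain s where s: "\<And>n. s n \<in> f ` C" "s \<longlonglongrightarrow> m"
    by (auto simp: closure_sequential)
  then have "\<forall>n. \<exists>w. w \<in> C \<and> f w = s n"
    by (metis imageE)
  then obtain P where P: "\<And>n. P n \<in> C" "\<And>n. f (P n) = s n"
    by metis
  define p where "p n = fst (P n)" for n
  have "Cauchy p"
  proof (rule Cauchy_if_sq_dist_le_null)
    show "(\<lambda>n. 4 * (s n - m)) \<longlonglongrightarrow> 0"
      using s(2) by (auto intro!: tendsto_eq_intros)
    fix n k
    have "(1 / 2) *\<^sub>R P n + (1 / 2) *\<^sub>R P k \<in> C"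
      using P(1) assms(2) by (intro convexD) auto
    then have "m \<le> f ((1 / 2) *\<^sub>R P n + (1 / 2) *\<^sub>R P k)"
      by (rule m_le)
    also have "\<dots> = (f (P n) + f (P k)) / 2 - (norm (p n - p k))\<^sup>2 / 8"
    proof -
      obtain a r b q where "P n = (a, r)" "P k = (b, q)" by fastforce
      moreover have "(norm ((1 / 2) *\<^sub>R a + (1 / 2) *\<^sub>R b))\<^sup>2 = (norm (a + b))\<^sup>2 / 4"
        by (simp add: scaleR_add_right[symmetric] power2_eq_square)
      ultimately show ?thesis
        using parallelogram_law[of a b] by (simp add: f_def p_def) argo
    qed
    finally show "(dist (p n) (p k))\<^sup>2 \<le> 4 * (s n - m) + 4 * (s k - m)"
      by (simp add: dist_norm P(2)) argo
  qed
  then obtain p0 where p0: "p \<longlonglongrightarrow> p0"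
    by (auto simp: Cauchy_convergent_iff convergent_def)
  define r0 where "r0 = m - (norm p0)\<^sup>2 / 2"
  have "snd (P n) = s n - (norm (p n))\<^sup>2 / 2" for n
    using P(2)[of n] by (simp add: f_def p_def case_prod_beta)
  then have r0: "(\<lambda>n. snd (P n)) \<longlonglongrightarrow> r0"
    unfolding r0_def using s(2) p0 by (auto intro!: tendsto_eq_intros)
  have "P \<longlonglongrightarrow> (p0, r0)"
    using tendsto_Pair[OF p0 r0] by (simp add: p_def)
  then have "(p0, r0) \<in> C"
    using assms(1) P(1) closed_sequentially by blast
  moreover have "r0 + (norm p0)\<^sup>2 / 2 \<le> r + (norm p)\<^sup>2 / 2" if "(p, r) \<in> C" for p r
    using m_le[OF that] by (simp add: r0_def f_def)
  ultimately show thesis by (rule that)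
qed

lemma nonneg_if_nonneg_on_unit_interval:
  fixes c K :: real
  assumes "\<And>t. 0 < t \<Longrightarrow> t \<le> 1 \<Longrightarrow> 0 \<le> c + t * K"
  shows "0 \<le> c"
proof (rule LIMSEQ_le_const)
  have "(\<lambda>n. c + K * inverse (real (Suc n))) \<longlonglongrightarrow> c + K * 0"
    by (intro tendsto_intros LIMSEQ_inverse_real_of_nat)
  then show "(\<lambda>n. c + K / real (Suc n)) \<longlonglongrightarrow> c"
    by (simp add: divide_inverse)
  show "\<exists>N. \<forall>n\<ge>N. 0 \<le> c + K / real (Suc n)"
    using assms[of "1 / real (Suc n)" for n] by auto
qed

lemma quadratic_min_variational_ineq:
  fixes C :: "('b::real_inner \<times> real) set"
  assumes "convex C" "(p0, r0) \<in> C" "(p, r) \<in> C"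
    and min: "\<And>p r. (p, r) \<in> C \<Longrightarrow> r0 + (norm p0)\<^sup>2 / 2 \<le> r + (norm p)\<^sup>2 / 2"
  shows "0 \<le> r - r0 + inner p0 (p - p0)"
proof (rule nonneg_if_nonneg_on_unit_interval)
  fix t :: real assume t: "0 < t" "t \<le> 1"
  have "(1 - t) *\<^sub>R (p0, r0) + t *\<^sub>R (p, r) \<in> C"
    using assms(1-3) t by (intro convexD) auto
  moreover have "(1 - t) *\<^sub>R (p0, r0) + t *\<^sub>R (p, r) = (p0 + t *\<^sub>R (p - p0), r0 + t * (r - r0))"
    by (simp add: algebra_simps)
  ultimately have "r0 + (norm p0)\<^sup>2 / 2 \<le> r0 + t * (r - r0) + (norm (p0 + t *\<^sub>R (p - p0)))\<^sup>2 / 2"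
    using min by metis
  also have "\<dots> = r0 + (norm p0)\<^sup>2 / 2
      + t * ((r - r0 + inner p0 (p - p0)) + t * ((norm (p - p0))\<^sup>2 / 2))"
    unfolding norm_add_scaleR_square
    by (simp add: algebra_simps power2_eq_square del: inner_diff_right)
  finally show "0 \<le> r - r0 + inner p0 (p - p0) + t * ((norm (p - p0))\<^sup>2 / 2)"
    using t by (simp add: zero_le_mult_iff)
qed

section \<open>Minty's theorem\<close>

lemma max_monotone_monotone:
  assumes "max_monotone A" "u \<in> A x" "v \<in> A y"
  shows "0 \<le> inner (x - y) (u - v)"
  using assms unfolding max_monotone_def monotone_op_def by blast

lemma max_monotone_maximal:
  assumes "max_monotone A" and "\<And>y v. v \<in> A y \<Longrightarrow> 0 \<le> inner (x - y) (u - v)"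
  shows "u \<in> A x"
  using assms unfolding max_monotone_def by blast

lemma max_monotone_graph_nonempty:
  assumes "max_monotone A"
  obtains y v where "v \<in> A y"
  using max_monotone_maximal[OF assms, of 0 0] by blast

definition fitzpatrick_epigraph :: "('a::real_inner \<Rightarrow> 'a set) \<Rightarrow> (('a \<times> 'a) \<times> real) set" where
  "fitzpatrick_epigraph B =
     {((x, u), r). \<forall>y v. v \<in> B y \<longrightarrow> inner x v + inner y u - inner y v \<le> r}"

lemma fitzpatrick_epigraph_eq_Inter_halfspaces:
  "fitzpatrick_epigraph B = (\<Inter>(y, v) \<in> {(y, v). v \<in> B y}. {w. inner ((v, y), -1) w \<le> inner y v})"
  unfolding fitzpatrick_epigraph_def by (force simp: inner_commute)

lemma convex_fitzpatrick_epigraph: "convex (fitzpatrick_epigraph B)"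
  unfolding fitzpatrick_epigraph_eq_Inter_halfspaces
  by (auto intro!: convex_INT convex_halfspace_le)

lemma closed_fitzpatrick_epigraph: "closed (fitzpatrick_epigraph B)"
  unfolding fitzpatrick_epigraph_eq_Inter_halfspaces
  by (auto intro!: closed_INT closed_halfspace_le)

lemma graph_in_fitzpatrick_epigraph:
  assumes "max_monotone B" "u \<in> B x"
  shows "((x, u), inner x u) \<in> fitzpatrick_epigraph B"
proof -
  have "inner x v + inner y u - inner y v \<le> inner x u" if "v \<in> B y" for y v
    using max_monotone_monotone[OF assms(1,2) that]
    by (simp add: inner_diff_left inner_diff_right inner_commute)
  then show ?thesis unfolding fitzpatrick_epigraph_def by auto
qed

lemma fitzpatrick_epigraph_inner_le:
  assumes "max_monotone B" "((x, u), r) \<in> fitzpatrick_epigraph B"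
  shows "inner x u \<le> r"
proof (rule ccontr)
  assume "\<not> inner x u \<le> r"
  moreover have "inner x v + inner y u - inner y v \<le> r" if "v \<in> B y" for y v
    using assms(2) that unfolding fitzpatrick_epigraph_def by auto
  ultimately have "u \<in> B x"
    by (intro max_monotone_maximal[OF assms(1)])
      (fastforce simp: inner_diff_left inner_diff_right)
  then show False
    using assms(2) \<open>\<not> inner x u \<le> r\<close> unfolding fitzpatrick_epigraph_def by fastforce
qed

theorem minty_zero_in_range:
  fixes B :: "'a::{real_inner,complete_space} \<Rightarrow> 'a set"
  assumes B: "max_monotone B"
  obtains a where "- a \<in> B a"
proof -
  let ?F = "fitzpatrick_epigraph B"
  obtain y v where "v \<in> B y"
    using max_monotone_graph_nonempty[OF B] .
  then have "?F \<noteq> {}"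
    using graph_in_fitzpatrick_epigraph[OF B] by blast
  moreover have "bdd_below ((\<lambda>(p, r). r + (norm p)\<^sup>2 / 2) ` ?F)"
  proof (rule bdd_belowI)
    fix s assume "s \<in> (\<lambda>(p, r). r + (norm p)\<^sup>2 / 2) ` ?F"
    then obtain x u r where xur: "((x, u), r) \<in> ?F" and s: "s = r + (norm (x, u))\<^sup>2 / 2"
      by auto
    have "0 \<le> (norm (x + u))\<^sup>2 / 2" by simp
    also have "\<dots> = inner x u + ((norm x)\<^sup>2 + (norm u)\<^sup>2) / 2"
      by (simp add: power2_norm_eq_inner inner_add_left inner_add_right inner_commute field_simps)
    also have "\<dots> \<le> s"
      using fitzpatrick_epigraph_inner_le[OF B xur] by (simp add: s norm_Pair)
    finally show "0 \<le> s" .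
  qed
  ultimately obtain x0 u0 r0 where min: "((x0, u0), r0) \<in> ?F"
    "\<And>p r. (p, r) \<in> ?F \<Longrightarrow> r0 + (norm (x0, u0))\<^sup>2 / 2 \<le> r + (norm p)\<^sup>2 / 2"
    using closed_convex_has_min_quadratic[OF closed_fitzpatrick_epigraph convex_fitzpatrick_epigraph]
    by (metis surj_pair)
  have key: "(norm (x0 + u0))\<^sup>2 \<le> inner (y + u0) (v + x0)" if "v \<in> B y" for y v
  proof -
    have "0 \<le> inner y v - r0 + inner (x0, u0) ((y, v) - (x0, u0))"
      using quadratic_min_variational_ineq[OF convex_fitzpatrick_epigraph min(1)
          graph_in_fitzpatrick_epigraph[OF B that] min(2)] .
    moreover have "inner x0 u0 \<le> r0"
      using fitzpatrick_epigraph_inner_le[OF B min(1)] .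
    ultimately show ?thesis
      by (simp add: power2_norm_eq_inner inner_add_left inner_add_right inner_diff_right
          inner_commute)
  qed
  have "- x0 \<in> B (- u0)"
  proof (rule max_monotone_maximal[OF B])
    fix y v assume "v \<in> B y"
    have "inner (- u0 - y) (- x0 - v) = inner (y + u0) (v + x0)"
      by (metis inner_minus_left inner_minus_right minus_diff_eq minus_minus diff_minus_eq_add
          add.commute)
    then show "0 \<le> inner (- u0 - y) (- x0 - v)"
      using key[OF \<open>v \<in> B y\<close>] by (metis order_trans zero_le_power2)
  qed
  with key[OF this] have "x0 + u0 = 0"
    by simp
  then have "- (- u0) \<in> B (- u0)"
    using \<open>- x0 \<in> B (- u0)\<close> by (metis add_eq_0_iff minus_minus)
  then show thesis by (rule that)
qed

section \<open>Resolvents\<close>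

lemma resolvent_eqI:
  assumes "max_monotone A" "\<gamma> > 0" "u \<in> A z" "x = z + \<gamma> *\<^sub>R u"
  shows "resolvent \<gamma> A x = z"
  unfolding resolvent_def
proof (rule the_equality)
  show "\<exists>u\<in>A z. x = z + \<gamma> *\<^sub>R u"
    using assms(3,4) by blast
next
  fix z' assume "\<exists>u'\<in>A z'. x = z' + \<gamma> *\<^sub>R u'"
  then obtain u' where u': "u' \<in> A z'" "x = z' + \<gamma> *\<^sub>R u'" by blast
  then have diff: "z' - z = \<gamma> *\<^sub>R (u - u')"
    using assms(4) by (simp add: algebra_simps)
  have "0 \<le> inner (z' - z) (u' - u)"
    using max_monotone_monotone[OF assms(1) u'(1) assms(3)] .
  also have "\<dots> = - \<gamma> * (norm (u - u'))\<^sup>2"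
    unfolding diff by (simp add: power2_norm_eq_inner inner_diff_left inner_diff_right algebra_simps)
  finally have "u = u'"
    using assms(2) by (simp add: mult_le_0_iff)
  then show "z' = z" using diff by simp
qed

lemma max_monotone_scaled_shift:
  assumes A: "max_monotone A" and "\<gamma> > 0"
  shows "max_monotone (\<lambda>a. (*\<^sub>R) \<gamma> ` A (a + x))"
  unfolding max_monotone_def monotone_op_def
proof (intro conjI allI impI)
  fix a b u v assume "u \<in> (*\<^sub>R) \<gamma> ` A (a + x)" "v \<in> (*\<^sub>R) \<gamma> ` A (b + x)"
  then obtain u' v' where "u' \<in> A (a + x)" "u = \<gamma> *\<^sub>R u'" "v' \<in> A (b + x)" "v = \<gamma> *\<^sub>R v'"
    by auto
  then show "0 \<le> inner (a - b) (u - v)"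
    using max_monotone_monotone[OF A, of u' "a + x" v' "b + x"] \<open>\<gamma> > 0\<close>
    by (simp add: scaleR_diff_right[symmetric])
next
  fix a u assume H: "\<forall>b v. v \<in> (*\<^sub>R) \<gamma> ` A (b + x) \<longrightarrow> 0 \<le> inner (a - b) (u - v)"
  have "(1 / \<gamma>) *\<^sub>R u \<in> A (a + x)"
  proof (rule max_monotone_maximal[OF A])
    fix y v assume "v \<in> A y"
    then have nonneg: "0 \<le> inner (a - (y - x)) (u - \<gamma> *\<^sub>R v)"
      using H by force
    have "(1 / \<gamma>) *\<^sub>R u - v = (1 / \<gamma>) *\<^sub>R (u - \<gamma> *\<^sub>R v)"
      using \<open>\<gamma> > 0\<close> by (simp add: scaleR_diff_right)
    moreover have "a + x - y = a - (y - x)"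
      by simp
    ultimately have "inner (a + x - y) ((1 / \<gamma>) *\<^sub>R u - v) = (1 / \<gamma>) * inner (a - (y - x)) (u - \<gamma> *\<^sub>R v)"
      by (simp only: inner_scaleR_right)
    with nonneg show "0 \<le> inner (a + x - y) ((1 / \<gamma>) *\<^sub>R u - v)"
      using \<open>\<gamma> > 0\<close> by simp
  qed
  then show "u \<in> (*\<^sub>R) \<gamma> ` A (a + x)"
    using \<open>\<gamma> > 0\<close> by (auto intro!: image_eqI[of _ _ "(1 / \<gamma>) *\<^sub>R u"])
qed

lemma resolvent_in_graph:
  fixes A :: "'a::{real_inner,complete_space} \<Rightarrow> 'a set"
  assumes A: "max_monotone A" and "\<gamma> > 0"
  obtains u where "u \<in> A (resolvent \<gamma> A x)" "x = resolvent \<gamma> A x + \<gamma> *\<^sub>R u"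
proof -
  obtain a where "- a \<in> (*\<^sub>R) \<gamma> ` A (a + x)"
    using minty_zero_in_range[OF max_monotone_scaled_shift[OF assms]] .
  then obtain u where "u \<in> A (a + x)" "- a = \<gamma> *\<^sub>R u"
    by auto
  then have u: "u \<in> A (a + x)" "x = (a + x) + \<gamma> *\<^sub>R u"
    by (simp_all flip: \<open>- a = \<gamma> *\<^sub>R u\<close>)
  moreover have "resolvent \<gamma> A x = a + x"
    using resolvent_eqI[OF A \<open>\<gamma> > 0\<close> u] .
  ultimately show thesis using that by simp
qed

lemma resolvent_nonexpansive:
  fixes A :: "'a::{real_inner,complete_space} \<Rightarrow> 'a set"
  assumes A: "max_monotone A" and "\<gamma> > 0"
  shows "dist (resolvent \<gamma> A x) (resolvent \<gamma> A x') \<le> dist x x'"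
proof -
  define z z' where "z = resolvent \<gamma> A x" and "z' = resolvent \<gamma> A x'"
  obtain u where u: "u \<in> A z" "x = z + \<gamma> *\<^sub>R u"
    unfolding z_def by (rule resolvent_in_graph[OF assms])
  obtain u' where u': "u' \<in> A z'" "x' = z' + \<gamma> *\<^sub>R u'"
    unfolding z'_def by (rule resolvent_in_graph[OF assms])
  have "(norm (z - z'))\<^sup>2 = inner (z - z') (x - x') - \<gamma> * inner (z - z') (u - u')"
    by (simp add: u u' power2_norm_eq_inner inner_diff_right inner_add_right algebra_simps)
  also have "\<dots> \<le> inner (z - z') (x - x')"
    using max_monotone_monotone[OF A u(1) u'(1)] \<open>\<gamma> > 0\<close> by simp
  also have "\<dots> \<le> norm (z - z') * norm (x - x')"
    by (rule norm_cauchy_schwarz)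
  finally have "norm (z - z') * norm (z - z') \<le> norm (z - z') * norm (x - x')"
    by (simp add: power2_eq_square)
  then have "norm (z - z') \<le> norm (x - x')"
    by (cases "norm (z - z') = 0") (simp_all add: mult_le_cancel_left_pos)
  then show ?thesis
    unfolding z_def z'_def dist_norm .
qed

lemma norm_resolvent_le:
  fixes A :: "'a::{real_inner,complete_space} \<Rightarrow> 'a set"
  assumes A: "max_monotone A" and "\<gamma> > 0" and "v \<in> A y"
  shows "norm (resolvent \<gamma> A x) \<le> norm x + 2 * norm y + \<gamma> * norm v"
proof -
  have "resolvent \<gamma> A (y + \<gamma> *\<^sub>R v) = y"
    using resolvent_eqI[OF assms(1,2,3)] by simp
  then have "norm (resolvent \<gamma> A x - y) \<le> norm (x - (y + \<gamma> *\<^sub>R v))"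
    using resolvent_nonexpansive[OF assms(1,2), of x "y + \<gamma> *\<^sub>R v"] by (simp add: dist_norm)
  also have "\<dots> \<le> norm x + norm y + \<gamma> * norm v"
    using norm_triangle_ineq4[of x "y + \<gamma> *\<^sub>R v"] norm_triangle_ineq[of y "\<gamma> *\<^sub>R v"] \<open>\<gamma> > 0\<close>
    by simp
  finally show ?thesis
    using norm_triangle_ineq2[of "resolvent \<gamma> A x" y] by linarith
qed

section \<open>Relocators\<close>

lemma reloc_diff:
  assumes "\<gamma> \<noteq> 0"
  shows "reloc A \<delta> \<gamma> x i - reloc A \<gamma> \<gamma> x i
    = ((\<delta> - \<gamma>) / \<gamma>) *\<^sub>R (x i - resolvent \<gamma> (A 1) (x 1))"
proof -
  have "\<delta> / \<gamma> - 1 = (\<delta> - \<gamma>) / \<gamma>"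
    using assms by (simp add: field_simps)
  then show ?thesis
    using assms unfolding reloc_def Let_def by (simp add: algebra_simps flip: scaleR_diff_left)
qed

lemma pnorm_eq_L2_set: "pnorm N x = L2_set (\<lambda>i. norm (x i)) {1..N-1}"
  unfolding pnorm_def L2_set_def ..

lemma pnorm_scaleR: "pnorm N (\<lambda>i. c *\<^sub>R x i) = \<bar>c\<bar> * pnorm N x"
  unfolding pnorm_eq_L2_set by (simp add: L2_set_right_distrib)

lemma norm_le_pnorm: "i \<in> {1..N-1} \<Longrightarrow> norm (x i) \<le> pnorm N x"
  unfolding pnorm_eq_L2_set by (intro member_le_L2_set) auto

lemma pnorm_diff_const_le: "pnorm N (\<lambda>i. x i - a) \<le> pnorm N x + sqrt (real (N - 1)) * norm a"
proof -
  have "pnorm N (\<lambda>i. x i - a) \<le> L2_set (\<lambda>i. norm (x i) + norm a) {1..N-1}"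
    unfolding pnorm_eq_L2_set by (rule L2_set_mono) (simp_all add: norm_triangle_ineq4)
  also have "\<dots> \<le> pnorm N x + sqrt (real (N - 1)) * norm a"
    using L2_set_triangle_ineq[of "\<lambda>i. norm (x i)" "\<lambda>i. norm a" "{1..N-1}"]
    by (simp add: pnorm_eq_L2_set L2_set_constant)
  finally show ?thesis .
qed

lemma pnorm_reloc_diff:
  assumes "\<gamma> > 0"
  shows "pnorm N (\<lambda>i. reloc A \<delta> \<gamma> x i - reloc A \<gamma> \<gamma> x i)
    = \<bar>\<delta> - \<gamma>\<bar> / \<gamma> * pnorm N (\<lambda>i. x i - resolvent \<gamma> (A 1) (x 1))"
  using assms by (simp add: reloc_diff pnorm_scaleR abs_div)

lemma pnorm_reloc_diff_le:
  fixes A :: "nat \<Rightarrow> 'a::{real_inner,complete_space} \<Rightarrow> 'a set"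
  assumes A1: "max_monotone (A 1)" and "v \<in> A 1 y" and "1 \<in> {1..N-1}"
    and "0 < \<gamma>0" "\<gamma>0 \<le> \<gamma>" "\<gamma> \<le> M" "pnorm N x \<le> M"
  shows "pnorm N (\<lambda>i. reloc A \<delta> \<gamma> x i - reloc A \<gamma> \<gamma> x i)
    \<le> (M + sqrt (real (N - 1)) * (M + 2 * norm y + M * norm v)) / \<gamma>0 * \<bar>\<delta> - \<gamma>\<bar>"
proof -
  define C where "C = M + sqrt (real (N - 1)) * (M + 2 * norm y + M * norm v)"
  have "\<gamma> > 0" "M \<ge> 0"
    using assms(4-6) by linarith+
  have "norm (resolvent \<gamma> (A 1) (x 1)) \<le> M + 2 * norm y + M * norm v"
    using norm_resolvent_le[OF A1 \<open>\<gamma> > 0\<close> \<open>v \<in> A 1 y\<close>, of "x 1"]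
      norm_le_pnorm[OF assms(3), of x] mult_right_mono[of \<gamma> M "norm v"] assms(6,7) by simp
  then have "pnorm N x + sqrt (real (N - 1)) * norm (resolvent \<gamma> (A 1) (x 1)) \<le> C"
    unfolding C_def using assms(7) by (intro add_mono mult_left_mono) auto
  then have "pnorm N (\<lambda>i. x i - resolvent \<gamma> (A 1) (x 1)) \<le> C"
    using pnorm_diff_const_le[of N x "resolvent \<gamma> (A 1) (x 1)"] by linarith
  then have "pnorm N (\<lambda>i. reloc A \<delta> \<gamma> x i - reloc A \<gamma> \<gamma> x i) \<le> \<bar>\<delta> - \<gamma>\<bar> / \<gamma> * C"
    unfolding pnorm_reloc_diff[OF \<open>\<gamma> > 0\<close>] using \<open>\<gamma> > 0\<close> by (intro mult_left_mono) simp_all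
  also have "\<dots> \<le> \<bar>\<delta> - \<gamma>\<bar> / \<gamma>0 * C"
    using assms(4,5) \<open>M \<ge> 0\<close> unfolding C_def
    by (intro mult_right_mono divide_left_mono) auto
  finally show ?thesis
    unfolding C_def by (simp add: mult.commute)
qed

theorem lemma5p1:
  fixes A :: "nat \<Rightarrow> 'a::{real_inner, complete_space} \<Rightarrow> 'a set"
    and N :: nat and \<theta> :: real and \<Gamma> :: "real set"
    and S :: "((nat \<Rightarrow> 'a) \<times> real) set"
  assumes "N \<ge> 2"
    and "\<forall>i\<in>{1..N}. max_monotone (A i)"
    and "0 < \<theta>" and "\<theta> < 1"
    and "\<Gamma> \<noteq> {}" and "is_interval \<Gamma>" and "closed \<Gamma>" and "\<Gamma> \<subseteq> {0<..}"
    and "S \<noteq> {}"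
    and "\<exists>M. \<forall>(x, \<gamma>)\<in>S. pnorm N x \<le> M \<and> \<bar>\<gamma>\<bar> \<le> M"
    and "S \<subseteq> (\<Union>\<gamma>\<in>\<Gamma>. mt_fix N A \<theta> \<gamma> \<times> {\<gamma>})"
  shows "\<exists>L \<ge> 0. \<forall>\<delta>\<in>\<Gamma>. \<forall>(x, \<gamma>)\<in>S.
           pnorm N (\<lambda>i. reloc A \<delta> \<gamma> x i - reloc A \<gamma> \<gamma> x i) \<le> L * \<bar>\<delta> - \<gamma>\<bar>"
proof -
  obtain M where M: "\<And>x \<gamma>. (x, \<gamma>) \<in> S \<Longrightarrow> pnorm N x \<le> M \<and> \<bar>\<gamma>\<bar> \<le> M"
    using assms(10) by blast
  have "bdd_below \<Gamma>"
    using assms(8) by (intro bdd_belowI[of _ 0]) auto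
  define \<gamma>0 where "\<gamma>0 = Inf \<Gamma>"
  have "\<gamma>0 > 0"
    using closed_contains_Inf[OF assms(5) \<open>bdd_below \<Gamma>\<close> assms(7)] assms(8) \<gamma>0_def by auto
  have A1: "max_monotone (A 1)" and "1 \<in> {1..N-1}"
    using assms(1,2) by auto
  obtain y v where "v \<in> A 1 y"
    using max_monotone_graph_nonempty[OF A1] .
  define L where "L = (M + sqrt (real (N - 1)) * (M + 2 * norm y + M * norm v)) / \<gamma>0"
  have "pnorm N (\<lambda>i. reloc A \<delta> \<gamma> x i - reloc A \<gamma> \<gamma> x i) \<le> L * \<bar>\<delta> - \<gamma>\<bar>"
    if "(x, \<gamma>) \<in> S" for \<delta> x \<gamma>
  proof -
    have "\<gamma>0 \<le> \<gamma>"
      unfolding \<gamma>0_def using \<open>bdd_below \<Gamma>\<close> that assms(11) by (blast intro: cInf_lower)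
    then show ?thesis
      unfolding L_def using M[OF that] \<open>\<gamma>0 > 0\<close>
      by (intro pnorm_reloc_diff_le[where A = A, OF A1 \<open>v \<in> A 1 y\<close> \<open>1 \<in> {1..N-1}\<close>]) auto
  qed
  moreover have "M \<ge> 0"
    using assms(9) M by force
  then have "L \<ge> 0"
    using \<open>\<gamma>0 > 0\<close> unfolding L_def by simp
  ultimately show ?thesis by blast
qed

end
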